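(* For all $\boldsymbol\mu,\boldsymbol\mu'\in\mathcal P(\mathcal X\times[K])$ and every collection $\boldsymbol\pi=(\pi_k)_{k\in[K]}$ of decision rules $\pi_k:\mathcal X\times\mathcal P(\mathcal X\times[K])\to\mathcal P(\mathcal U)$ with $|\pi_k(x,\boldsymbol\mu_1)-\pi_k(x,\boldsymbol\mu_2)|_1\le L_Q|\boldsymbol\mu_1-\boldsymbol\mu_2|_1$ for all $x,k,\boldsymbol\mu_1,\boldsymbol\mu_2$, $$\sum_{k\in[K]}|r_k^{\mathrm{MF}}(\boldsymbol\mu,\boldsymbol\pi)-r_k^{\mathrm{MF}}(\boldsymbol\mu',\boldsymbol\pi)|\le S_R|\boldsymbol\mu-\boldsymbol\mu'|_1,\qquad S_R=M_R(1+L_Q)+L_R(2+L_Q).$$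
   Context: $K\ge1$, $[K]=\{1,\dots,K\}$, $\mathcal X,\mathcal U$ finite, $\mathcal P(A)$ the probability distributions on $A$, $|\cdot|_1$ the $L_1$ norm, $M_R,L_R,L_Q>0$. For each $k$, $r_k:\mathcal X\times\mathcal U\times\mathcal P(\mathcal X\times[K])\times\mathcal P(\mathcal U\times[K])\to\mathbb R$ satisfies $|r_k(x,u,\boldsymbol\mu_1,\boldsymbol\nu_1)|\le M_R$ and $|r_k(x,u,\boldsymbol\mu_1,\boldsymbol\nu_1)-r_k(x,u,\boldsymbol\mu_2,\boldsymbol\nu_2)|\le L_R(|\boldsymbol\mu_1-\boldsymbol\mu_2|_1+|\boldsymbol\nu_1-\boldsymbol\nu_2|_1)$ for all arguments. Define $\nu^{\mathrm{MF}}(\boldsymbol\mu,\boldsymbol\pi)(u,k)=\sum_x\pi_k(x,\boldsymbol\mu)(u)\boldsymbol\mu(x,k)$ and $r_k^{\mathrm{MF}}(\boldsymbol\mu,\boldsymbol\pi)=\sum_{x\in\mathcal X}\sum_{u\in\mathcal U}\boldsymbol\mu(x,k)\pi_k(x,\boldsymbol\mu)(u)\,r_k(x,u,\boldsymbol\mu,\nu^{\mathrm{MF}}(\boldsymbol\mu,\boldsymbol\pi))$. *)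

theory Defs
  imports Main "HOL-Analysis.Analysis"
begin

definition is_dist :: "'a set \<Rightarrow> ('a \<Rightarrow> real) \<Rightarrow> bool" where
  "is_dist A p \<longleftrightarrow> (\<forall>a. 0 \<le> p a) \<and> (\<forall>a. a \<notin> A \<longrightarrow> p a = 0) \<and> sum p A = 1"

definition l1 :: "'a set \<Rightarrow> ('a \<Rightarrow> real) \<Rightarrow> ('a \<Rightarrow> real) \<Rightarrow> real" where
  "l1 A p q = (\<Sum>a\<in>A. \<bar>p a - q a\<bar>)"

abbreviation idx :: "nat \<Rightarrow> nat set" where "idx K \<equiv> {1..K}"

definition nu_MF :: "('x::finite \<times> nat \<Rightarrow> real) \<Rightarrow> (nat \<Rightarrow> 'x \<Rightarrow> ('x \<times> nat \<Rightarrow> real) \<Rightarrow> ('u \<Rightarrow> real))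
    \<Rightarrow> ('u \<times> nat \<Rightarrow> real)" where
  "nu_MF \<mu> \<pi> = (\<lambda>(u, k). \<Sum>x\<in>UNIV. \<pi> k x \<mu> u * \<mu> (x, k))"

definition r_MF :: "(nat \<Rightarrow> 'x \<Rightarrow> 'u \<Rightarrow> ('x \<times> nat \<Rightarrow> real) \<Rightarrow> ('u \<times> nat \<Rightarrow> real) \<Rightarrow> real)
    \<Rightarrow> nat \<Rightarrow> ('x::finite \<times> nat \<Rightarrow> real) \<Rightarrow> (nat \<Rightarrow> 'x \<Rightarrow> ('x \<times> nat \<Rightarrow> real) \<Rightarrow> ('u::finite \<Rightarrow> real))
    \<Rightarrow> real" where
  "r_MF r k \<mu> \<pi> = (\<Sum>x\<in>UNIV. \<Sum>u\<in>UNIV. \<mu> (x, k) * \<pi> k x \<mu> u * r k x u \<mu> (nu_MF \<mu> \<pi>))"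

end

theory Submission
  imports Defs
begin

text \<open>For fixed k, r_MF is an expectation of r over the population slice \<mu>(\<cdot>, k) and the
  decision rules \<pi>_k, so telescoping a\<cdot>b\<cdot>c - a'\<cdot>b'\<cdot>c' splits its variation into three parts:
  the change of the slice (weighted by M_R), the change of the decision rules (at most
  M_R L_Q |\<mu> - \<mu>'|_1), and the change of the reward (at most L_R (|\<mu> - \<mu>'|_1 + |\<nu> - \<nu>'|_1)).
  The same telescoping shows that the action distribution \<nu>^MF is (1 + L_Q)-Lipschitz in \<mu>.
  Summing over k, the slices of \<mu>' add up to 1, which gives
  M_R + M_R L_Q + L_R (1 + (1 + L_Q)).\<close>

lemma sum_Times_eq_sum_sum: "sum f (A \<times> B) = (\<Sum>k\<in>B. \<Sum>x\<in>A. f (x, k))"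
  by (simp add: sum.cartesian_product' sum.swap[of _ A])

lemma l1_Times_eq_sum_l1:
  "l1 (A \<times> B) p q = (\<Sum>k\<in>B. l1 A (\<lambda>x. p (x, k)) (\<lambda>x. q (x, k)))"
  unfolding l1_def by (rule sum_Times_eq_sum_sum)

lemma sum_slices_l1_plus_mass:
  assumes "is_dist (A \<times> B) q"
  shows "(\<Sum>k\<in>B. M * l1 A (\<lambda>x. p (x, k)) (\<lambda>x. q (x, k)) + C * (\<Sum>x\<in>A. q (x, k)))
    = M * l1 (A \<times> B) p q + C"
  using assms unfolding is_dist_def
  by (simp add: sum.distrib l1_Times_eq_sum_l1 sum_Times_eq_sum_sum sum_distrib_left[symmetric])

lemma abs_mult3_diff_le:
  fixes a a' b b' c c' M L :: real
  assumes "0 \<le> a'" "0 \<le> b" "0 \<le> b'" "\<bar>c\<bar> \<le> M" "\<bar>c - c'\<bar> \<le> L"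
  shows "\<bar>a * b * c - a' * b' * c'\<bar> \<le> M * b * \<bar>a - a'\<bar> + M * a' * \<bar>b - b'\<bar> + L * a' * b'"
proof -
  have "a * b * c - a' * b' * c' = (a - a') * b * c + a' * (b - b') * c + a' * b' * (c - c')"
    by (simp add: algebra_simps)
  moreover have "\<bar>(a - a') * b * c\<bar> \<le> M * b * \<bar>a - a'\<bar>"
    using assms mult_right_mono[of "\<bar>c\<bar>" M "b * \<bar>a - a'\<bar>"] by (simp add: abs_mult ac_simps)
  moreover have "\<bar>a' * (b - b') * c\<bar> \<le> M * a' * \<bar>b - b'\<bar>"
    using assms mult_right_mono[of "\<bar>c\<bar>" M "a' * \<bar>b - b'\<bar>"] by (simp add: abs_mult ac_simps)
  moreover have "\<bar>a' * b' * (c - c')\<bar> \<le> L * a' * b'"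
    using assms mult_right_mono[of "\<bar>c - c'\<bar>" L "a' * b'"] by (simp add: abs_mult ac_simps)
  ultimately show ?thesis
    by (smt (verit, best) abs_triangle_ineq)
qed

lemma l1_mixture_le:
  fixes a a' :: "'x \<Rightarrow> real" and b b' :: "'x \<Rightarrow> 'u \<Rightarrow> real"
  assumes "finite X" "finite U"
    and a': "\<And>x. x \<in> X \<Longrightarrow> 0 \<le> a' x"
    and b: "\<And>x. x \<in> X \<Longrightarrow> is_dist U (b x)"
    and E: "\<And>x. x \<in> X \<Longrightarrow> l1 U (b x) (b' x) \<le> E"
  shows "l1 U (\<lambda>u. \<Sum>x\<in>X. b x u * a x) (\<lambda>u. \<Sum>x\<in>X. b' x u * a' x) \<le> l1 X a a' + E * sum a' X"
proof -
  have "l1 U (\<lambda>u. \<Sum>x\<in>X. b x u * a x) (\<lambda>u. \<Sum>x\<in>X. b' x u * a' x)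
      = (\<Sum>u\<in>U. \<bar>\<Sum>x\<in>X. b x u * (a x - a' x) + (b x u - b' x u) * a' x\<bar>)"
    unfolding l1_def by (simp add: sum_subtractf[symmetric] algebra_simps)
  also have "\<dots> \<le> (\<Sum>u\<in>U. \<Sum>x\<in>X. b x u * \<bar>a x - a' x\<bar> + \<bar>b x u - b' x u\<bar> * a' x)"
    using a' b unfolding is_dist_def
    by (intro sum_mono order_trans[OF sum_abs])
      (simp add: abs_mult order_trans[OF abs_triangle_ineq])
  also have "\<dots> = (\<Sum>x\<in>X. \<bar>a x - a' x\<bar> * sum (b x) U + l1 U (b x) (b' x) * a' x)"
    unfolding l1_def
    by (subst sum.swap) (simp add: sum.distrib sum_distrib_left sum_distrib_right ac_simps)
  also have "\<dots> \<le> (\<Sum>x\<in>X. \<bar>a x - a' x\<bar> + E * a' x)"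
    using a' b E unfolding is_dist_def by (intro sum_mono) (simp add: mult_right_mono)
  also have "\<dots> = l1 X a a' + E * sum a' X"
    unfolding l1_def by (simp add: sum.distrib sum_distrib_left)
  finally show ?thesis .
qed

lemma expectation_mixture_diff_le:
  fixes a a' :: "'x \<Rightarrow> real" and b b' c c' :: "'x \<Rightarrow> 'u \<Rightarrow> real"
  assumes "finite X" "finite U" "0 \<le> M"
    and a': "\<And>x. x \<in> X \<Longrightarrow> 0 \<le> a' x"
    and b: "\<And>x. x \<in> X \<Longrightarrow> is_dist U (b x)"
    and b': "\<And>x. x \<in> X \<Longrightarrow> is_dist U (b' x)"
    and E: "\<And>x. x \<in> X \<Longrightarrow> l1 U (b x) (b' x) \<le> E"
    and c: "\<And>x u. x \<in> X \<Longrightarrow> u \<in> U \<Longrightarrow> \<bar>c x u\<bar> \<le> M"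
    and c': "\<And>x u. x \<in> X \<Longrightarrow> u \<in> U \<Longrightarrow> \<bar>c x u - c' x u\<bar> \<le> L"
  shows "\<bar>(\<Sum>x\<in>X. \<Sum>u\<in>U. a x * b x u * c x u) - (\<Sum>x\<in>X. \<Sum>u\<in>U. a' x * b' x u * c' x u)\<bar>
     \<le> M * l1 X a a' + (M * E + L) * sum a' X"
proof -
  have "\<bar>(\<Sum>x\<in>X. \<Sum>u\<in>U. a x * b x u * c x u) - (\<Sum>x\<in>X. \<Sum>u\<in>U. a' x * b' x u * c' x u)\<bar>
      \<le> (\<Sum>x\<in>X. \<Sum>u\<in>U. \<bar>a x * b x u * c x u - a' x * b' x u * c' x u\<bar>)"
    unfolding sum_subtractf[symmetric] by (rule order_trans[OF sum_abs sum_mono[OF sum_abs]])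
  also have "\<dots> \<le> (\<Sum>x\<in>X. \<Sum>u\<in>U.
      M * b x u * \<bar>a x - a' x\<bar> + M * a' x * \<bar>b x u - b' x u\<bar> + L * a' x * b' x u)"
    using a' b b' c c' unfolding is_dist_def by (intro sum_mono abs_mult3_diff_le) auto
  also have "\<dots> = (\<Sum>x\<in>X. M * \<bar>a x - a' x\<bar> * sum (b x) U
      + M * a' x * l1 U (b x) (b' x) + L * a' x * sum (b' x) U)"
    unfolding l1_def by (simp add: sum.distrib sum_distrib_left sum_distrib_right ac_simps)
  also have "\<dots> \<le> (\<Sum>x\<in>X. M * \<bar>a x - a' x\<bar> + (M * E + L) * a' x)"
  proof (intro sum_mono)
    fix x assume "x \<in> X"
    then have "M * a' x * l1 U (b x) (b' x) \<le> M * a' x * E"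
      using a' E \<open>0 \<le> M\<close> by (simp add: mult_left_mono)
    with \<open>x \<in> X\<close> show "M * \<bar>a x - a' x\<bar> * sum (b x) U + M * a' x * l1 U (b x) (b' x)
        + L * a' x * sum (b' x) U \<le> M * \<bar>a x - a' x\<bar> + (M * E + L) * a' x"
      using b b' unfolding is_dist_def by (simp add: algebra_simps)
  qed
  also have "\<dots> = M * l1 X a a' + (M * E + L) * sum a' X"
    unfolding l1_def by (simp add: sum.distrib sum_distrib_left)
  finally show ?thesis .
qed

lemma is_dist_nu_MF:
  fixes \<mu> :: "'x::finite \<times> nat \<Rightarrow> real"
    and \<pi> :: "nat \<Rightarrow> 'x \<Rightarrow> ('x \<times> nat \<Rightarrow> real) \<Rightarrow> 'u::finite \<Rightarrow> real"
  assumes \<mu>: "is_dist (UNIV \<times> B) \<mu>" and \<pi>: "\<And>k x. k \<in> B \<Longrightarrow> is_dist UNIV (\<pi> k x \<mu>)"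
  shows "is_dist (UNIV \<times> B) (nu_MF \<mu> \<pi>)"
proof -
  have \<mu>_outside: "\<mu> (x, k) = 0" if "k \<notin> B" for x k
    using \<mu> that unfolding is_dist_def by auto
  have "0 \<le> nu_MF \<mu> \<pi> (u, k)" for u k
    using \<mu> \<pi> \<mu>_outside unfolding is_dist_def nu_MF_def
    by (cases "k \<in> B") (auto intro!: sum_nonneg)
  moreover have "nu_MF \<mu> \<pi> (u, k) = 0" if "k \<notin> B" for u k
    using \<mu>_outside[OF that] unfolding nu_MF_def by simp
  moreover have "sum (nu_MF \<mu> \<pi>) (UNIV \<times> B) = (\<Sum>k\<in>B. \<Sum>x\<in>UNIV. \<mu> (x, k) * sum (\<pi> k x \<mu>) UNIV)"
    unfolding sum_Times_eq_sum_sum nu_MF_def case_prod_conv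
    by (intro sum.cong refl, subst sum.swap) (simp add: sum_distrib_left ac_simps)
  then have "sum (nu_MF \<mu> \<pi>) (UNIV \<times> B) = 1"
    using \<mu> \<pi> unfolding is_dist_def by (simp add: sum_Times_eq_sum_sum)
  ultimately show ?thesis
    unfolding is_dist_def by auto
qed

lemma l1_nu_MF_le:
  fixes \<mu> \<mu>' :: "'x::finite \<times> nat \<Rightarrow> real"
    and \<pi> :: "nat \<Rightarrow> 'x \<Rightarrow> ('x \<times> nat \<Rightarrow> real) \<Rightarrow> 'u::finite \<Rightarrow> real"
  assumes \<mu>': "is_dist (UNIV \<times> B) \<mu>'"
    and \<pi>: "\<And>k x. k \<in> B \<Longrightarrow> is_dist UNIV (\<pi> k x \<mu>)"
    and \<pi>_lip: "\<And>k x. k \<in> B \<Longrightarrow> l1 UNIV (\<pi> k x \<mu>) (\<pi> k x \<mu>') \<le> L * l1 (UNIV \<times> B) \<mu> \<mu>'"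
  shows "l1 (UNIV \<times> B) (nu_MF \<mu> \<pi>) (nu_MF \<mu>' \<pi>) \<le> (1 + L) * l1 (UNIV \<times> B) \<mu> \<mu>'"
proof -
  define D where "D = l1 (UNIV \<times> B) \<mu> \<mu>'"
  have "l1 (UNIV \<times> B) (nu_MF \<mu> \<pi>) (nu_MF \<mu>' \<pi>)
      = (\<Sum>k\<in>B. l1 UNIV (\<lambda>u. \<Sum>x\<in>UNIV. \<pi> k x \<mu> u * \<mu> (x, k)) (\<lambda>u. \<Sum>x\<in>UNIV. \<pi> k x \<mu>' u * \<mu>' (x, k)))"
    unfolding l1_Times_eq_sum_l1 nu_MF_def by simp
  also have "\<dots> \<le> (\<Sum>k\<in>B. l1 UNIV (\<lambda>x. \<mu> (x, k)) (\<lambda>x. \<mu>' (x, k)) + L * D * (\<Sum>x\<in>UNIV. \<mu>' (x, k)))"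
  proof (intro sum_mono l1_mixture_le)
    fix k x assume "k \<in> B"
    show "0 \<le> \<mu>' (x, k)" using \<mu>' unfolding is_dist_def by simp
    show "is_dist UNIV (\<pi> k x \<mu>)" using \<pi>[OF \<open>k \<in> B\<close>] .
    show "l1 UNIV (\<pi> k x \<mu>) (\<pi> k x \<mu>') \<le> L * D" using \<pi>_lip[OF \<open>k \<in> B\<close>] unfolding D_def .
  qed simp_all
  also have "\<dots> = D + L * D"
    using sum_slices_l1_plus_mass[OF \<mu>', of 1] unfolding D_def by simp
  finally show ?thesis
    unfolding D_def by (simp add: algebra_simps)
qed

lemma abs_r_MF_diff_le:
  fixes \<mu> \<mu>' :: "'x::finite \<times> nat \<Rightarrow> real"
    and \<pi> :: "nat \<Rightarrow> 'x \<Rightarrow> ('x \<times> nat \<Rightarrow> real) \<Rightarrow> 'u::finite \<Rightarrow> real"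
  assumes "0 \<le> M" "\<And>x. 0 \<le> \<mu>' (x, k)"
    and "\<And>x. is_dist UNIV (\<pi> k x \<mu>)" "\<And>x. is_dist UNIV (\<pi> k x \<mu>')"
    and "\<And>x. l1 UNIV (\<pi> k x \<mu>) (\<pi> k x \<mu>') \<le> E"
    and "\<And>x u. \<bar>r k x u \<mu> (nu_MF \<mu> \<pi>)\<bar> \<le> M"
    and "\<And>x u. \<bar>r k x u \<mu> (nu_MF \<mu> \<pi>) - r k x u \<mu>' (nu_MF \<mu>' \<pi>)\<bar> \<le> L"
  shows "\<bar>r_MF r k \<mu> \<pi> - r_MF r k \<mu>' \<pi>\<bar>
    \<le> M * l1 UNIV (\<lambda>x. \<mu> (x, k)) (\<lambda>x. \<mu>' (x, k)) + (M * E + L) * (\<Sum>x\<in>UNIV. \<mu>' (x, k))"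
  unfolding r_MF_def using assms by (intro expectation_mixture_diff_le) auto

theorem lemma3:
  fixes K :: nat and M_R L_R L_Q :: real
    and r :: "nat \<Rightarrow> 'x::finite \<Rightarrow> 'u::finite \<Rightarrow> ('x \<times> nat \<Rightarrow> real) \<Rightarrow> ('u \<times> nat \<Rightarrow> real) \<Rightarrow> real"
    and \<pi> :: "nat \<Rightarrow> 'x \<Rightarrow> ('x \<times> nat \<Rightarrow> real) \<Rightarrow> ('u \<Rightarrow> real)"
    and \<mu> \<mu>' :: "'x \<times> nat \<Rightarrow> real"
  assumes K: "K \<ge> 1"
    and pos: "M_R > 0" "L_R > 0" "L_Q > 0"
    and r_bound: "\<And>k x u \<mu>1 \<nu>1. k \<in> idx K \<Longrightarrow> is_dist (UNIV \<times> idx K) \<mu>1 \<Longrightarrow>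
         is_dist (UNIV \<times> idx K) \<nu>1 \<Longrightarrow> \<bar>r k x u \<mu>1 \<nu>1\<bar> \<le> M_R"
    and r_lip: "\<And>k x u \<mu>1 \<nu>1 \<mu>2 \<nu>2. k \<in> idx K \<Longrightarrow>
         is_dist (UNIV \<times> idx K) \<mu>1 \<Longrightarrow> is_dist (UNIV \<times> idx K) \<nu>1 \<Longrightarrow>
         is_dist (UNIV \<times> idx K) \<mu>2 \<Longrightarrow> is_dist (UNIV \<times> idx K) \<nu>2 \<Longrightarrow>
         \<bar>r k x u \<mu>1 \<nu>1 - r k x u \<mu>2 \<nu>2\<bar>
           \<le> L_R * (l1 (UNIV \<times> idx K) \<mu>1 \<mu>2 + l1 (UNIV \<times> idx K) \<nu>1 \<nu>2)"
    and \<pi>_dist: "\<And>k x \<mu>1. k \<in> idx K \<Longrightarrow> is_dist (UNIV \<times> idx K) \<mu>1 \<Longrightarrow>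
         is_dist UNIV (\<pi> k x \<mu>1)"
    and \<pi>_lip: "\<And>k x \<mu>1 \<mu>2. k \<in> idx K \<Longrightarrow>
         is_dist (UNIV \<times> idx K) \<mu>1 \<Longrightarrow> is_dist (UNIV \<times> idx K) \<mu>2 \<Longrightarrow>
         l1 UNIV (\<pi> k x \<mu>1) (\<pi> k x \<mu>2) \<le> L_Q * l1 (UNIV \<times> idx K) \<mu>1 \<mu>2"
    and \<mu>: "is_dist (UNIV \<times> idx K) \<mu>"
    and \<mu>': "is_dist (UNIV \<times> idx K) \<mu>'"
  shows "(\<Sum>k\<in>idx K. \<bar>r_MF r k \<mu> \<pi> - r_MF r k \<mu>' \<pi>\<bar>)
           \<le> (M_R * (1 + L_Q) + L_R * (2 + L_Q)) * l1 (UNIV \<times> idx K) \<mu> \<mu>'"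
proof -
  define D where "D = l1 (UNIV \<times> idx K) \<mu> \<mu>'"
  define \<nu> where "\<nu> = nu_MF \<mu> \<pi>"
  define \<nu>' where "\<nu>' = nu_MF \<mu>' \<pi>"
  have \<nu>: "is_dist (UNIV \<times> idx K) \<nu>" and \<nu>': "is_dist (UNIV \<times> idx K) \<nu>'"
    unfolding \<nu>_def \<nu>'_def using \<mu> \<mu>' \<pi>_dist by (blast intro: is_dist_nu_MF)+
  have \<nu>_diff: "l1 (UNIV \<times> idx K) \<nu> \<nu>' \<le> (1 + L_Q) * D"
    unfolding \<nu>_def \<nu>'_def D_def using \<mu> \<mu>' \<pi>_dist \<pi>_lip by (intro l1_nu_MF_le) auto
  have r_diff: "\<bar>r k x u \<mu> \<nu> - r k x u \<mu>' \<nu>'\<bar> \<le> L_R * (2 + L_Q) * D" if "k \<in> idx K" for k x u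
    using r_lip[OF that \<mu> \<nu> \<mu>' \<nu>', where x = x and u = u]
      mult_left_mono[OF \<nu>_diff, of L_R] \<open>L_R > 0\<close>
    unfolding D_def by (simp add: algebra_simps)
  have \<mu>'_nonneg: "0 \<le> \<mu>' (x, k)" for x k
    using \<mu>' unfolding is_dist_def by simp
  define C where "C = M_R * (L_Q * D) + L_R * (2 + L_Q) * D"
  have "(\<Sum>k\<in>idx K. \<bar>r_MF r k \<mu> \<pi> - r_MF r k \<mu>' \<pi>\<bar>)
      \<le> (\<Sum>k\<in>idx K. M_R * l1 UNIV (\<lambda>x. \<mu> (x, k)) (\<lambda>x. \<mu>' (x, k)) + C * (\<Sum>x\<in>UNIV. \<mu>' (x, k)))"
    unfolding C_def using \<mu>'_nonneg \<pi>_dist[OF _ \<mu>] \<pi>_dist[OF _ \<mu>'] \<pi>_lip[OF _ \<mu> \<mu>']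
      r_bound[OF _ \<mu> \<nu>] r_diff \<open>M_R > 0\<close>
    unfolding \<nu>_def \<nu>'_def D_def by (intro sum_mono abs_r_MF_diff_le) simp_all
  also have "\<dots> = M_R * D + C"
    using \<mu>' unfolding D_def by (rule sum_slices_l1_plus_mass)
  also have "\<dots> = (M_R * (1 + L_Q) + L_R * (2 + L_Q)) * D"
    unfolding C_def by (simp add: algebra_simps)
  finally show ?thesis
    unfolding D_def .
qed

end
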